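(* Let $\mathcal{X}\subseteq\mathbb{R}^d$ be closed convex, $\mathcal{Z}$ a set, $f:\mathcal{X}\times\mathcal{Z}\to\mathbb{R}$ with $f(\cdot,z)$ convex and $L$-Lipschitz for all $z$, and $S=(z_1,\dots,z_n)\in\mathcal{Z}^n$ with $F_S(x)=\frac1n\sum_{i=1}^nf(x,z_i)$ and minimizer $x^*(S)\in\arg\min_{x\in\mathcal{X}}F_S(x)$. Let $\pi$ be an arbitrary permutation of $[n]$ and run fixed-permutation SGD for $K$ epochs with step size constant within each epoch: from $x^1_1=x^1\in\mathcal{X}$, $x^k_1=x^{k-1}_{n+1}$ for $k\ge2$ and $x^k_{t+1}=\mathsf{Proj}_{\mathcal{X}}(x^k_t-\eta_k\nabla f(x^k_t,z_{\pi(t)}))$ for $t=1,\dots,n$, with $\eta_k>0$; output $\bar x^K=\frac{1}{\sum_{k=1}^K\eta_k}\sum_{k=1}^K\eta_kx^k_1$. Then $$F_S(\bar x^K)-F_S(x^*(S))\le\frac{\|x^1-x^*(S)\|^2}{2n\sum_{k}\eta_k}+\frac{L^2(n+2)}{2}\cdot\frac{\sum_k\eta_k^2}{\sum_k\eta_k}.$$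
   Context: $\|\cdot\|$ is the Euclidean norm and $\mathsf{Proj}_{\mathcal{X}}$ the Euclidean projection; $\nabla f(x,z)$ is a fixed selection of a subgradient of $f(\cdot,z)$ at $x$, assumed to have norm at most $L$ (Lipschitz on an open set containing $\mathcal{X}$). Sums over $k$ range over $k=1,\dots,K$. *)

theory Defs
  imports "HOL-Analysis.Analysis"
begin

definition emp_risk :: "('a \<Rightarrow> 'z \<Rightarrow> real) \<Rightarrow> (nat \<Rightarrow> 'z) \<Rightarrow> nat \<Rightarrow> 'a \<Rightarrow> real" where
  "emp_risk f z n x = (\<Sum>i=1..n. f x (z i)) / real n"

text \<open>One pass of projected SGD with step size eta over the permuted data:
  sgd_pass ... x t is x_{t+1} when started from x_1 = x; step t (1-based) uses z_(pi t).\<close>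
primrec sgd_pass :: "'a::euclidean_space set \<Rightarrow> ('a \<Rightarrow> 'z \<Rightarrow> 'a) \<Rightarrow> (nat \<Rightarrow> 'z) \<Rightarrow> (nat \<Rightarrow> nat)
    \<Rightarrow> real \<Rightarrow> 'a \<Rightarrow> nat \<Rightarrow> 'a" where
  "sgd_pass X g z \<pi> eta x 0 = x"
| "sgd_pass X g z \<pi> eta x (Suc t) =
     (let y = sgd_pass X g z \<pi> eta x t in closest_point X (y - eta *\<^sub>R g y (z (\<pi> (Suc t)))))"

text \<open>Epoch starting points: sgd_start ... m = x^{m+1}_1 (so x^k_1 = sgd_start ... (k-1)).
  Epoch k uses step size eta k.\<close>
primrec sgd_start :: "'a::euclidean_space set \<Rightarrow> ('a \<Rightarrow> 'z \<Rightarrow> 'a) \<Rightarrow> (nat \<Rightarrow> 'z) \<Rightarrow> (nat \<Rightarrow> nat)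
    \<Rightarrow> (nat \<Rightarrow> real) \<Rightarrow> nat \<Rightarrow> 'a \<Rightarrow> nat \<Rightarrow> 'a" where
  "sgd_start X g z \<pi> eta n x1 0 = x1"
| "sgd_start X g z \<pi> eta n x1 (Suc m) =
     sgd_pass X g z \<pi> (eta (Suc m)) (sgd_start X g z \<pi> eta n x1 m) n"

definition sgd_avg :: "'a::euclidean_space set \<Rightarrow> ('a \<Rightarrow> 'z \<Rightarrow> 'a) \<Rightarrow> (nat \<Rightarrow> 'z) \<Rightarrow> (nat \<Rightarrow> nat)
    \<Rightarrow> (nat \<Rightarrow> real) \<Rightarrow> nat \<Rightarrow> 'a \<Rightarrow> nat \<Rightarrow> 'a" where
  "sgd_avg X g z \<pi> eta n x1 K =
     (1 / (\<Sum>k=1..K. eta k)) *\<^sub>R (\<Sum>k=1..K. eta k *\<^sub>R sgd_start X g z \<pi> eta n x1 (k - 1))"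

end

theory Submission
  imports Defs
begin

text \<open>Projection onto X is nonexpansive, so one step from x_t with data point z' gives
  |x_{t+1} - u|^2 <= |x_t - u|^2 - 2 e (f(x_t, z') - f(u, z')) + e^2 L^2 for every u in X.
  Within an epoch the iterates stay within t e L of the epoch's start x, so evaluating the
  losses at x instead of x_t costs at most 2 t e^2 L^2 at step t; since the pass visits every
  data point once, an epoch satisfies 2 e n (F_S(x) - F_S(u)) <= |x - u|^2 - |x' - u|^2 + n^2 e^2 L^2.\<close>

lemma dist_closest_point_le:
  assumes "convex S" "closed S" "u \<in> S"
  shows "dist (closest_point S y) u \<le> dist y u"
  using closest_point_lipschitz[OF assms(1,2), of y u] closest_point_self[OF assms(3)] assms(3)
  by auto

lemma convex_on_sum_functions:
  assumes "convex S" "\<And>i. i \<in> I \<Longrightarrow> convex_on S (h i)"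
  shows "convex_on S (\<lambda>x. \<Sum>i\<in>I. h i x)"
  using assms(2)
proof (induction I rule: infinite_finite_induct)
  case (insert i I)
  then show ?case by (simp add: convex_on_add)
qed (simp_all add: convex_on_const assms(1))

lemma convex_on_emp_risk:
  assumes "convex X" "\<And>i. i \<in> {1..n} \<Longrightarrow> convex_on X (\<lambda>x. f x (z i))"
  shows "convex_on X (emp_risk f z n)"
  unfolding emp_risk_def[abs_def]
  by (intro convex_on_cdiv convex_on_sum_functions assms) simp

lemma convex_on_weighted_mean:
  fixes w :: "'i \<Rightarrow> real" and p :: "'i \<Rightarrow> 'a::real_vector"
  assumes "convex_on C F" "finite I" "I \<noteq> {}"
    and "\<And>i. i \<in> I \<Longrightarrow> w i > 0" and "\<And>i. i \<in> I \<Longrightarrow> p i \<in> C"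
  shows "F ((1 / (\<Sum>i\<in>I. w i)) *\<^sub>R (\<Sum>i\<in>I. w i *\<^sub>R p i)) \<le> (\<Sum>i\<in>I. w i * F (p i)) / (\<Sum>i\<in>I. w i)"
proof -
  define W where "W = (\<Sum>i\<in>I. w i)"
  have "W > 0"
    unfolding W_def using assms(2-4) by (intro sum_pos) auto
  have "F (\<Sum>i\<in>I. (w i / W) *\<^sub>R p i) \<le> (\<Sum>i\<in>I. (w i / W) * F (p i))"
    using assms \<open>W > 0\<close>
    by (intro convex_on_sum[where C = C])
      (auto simp: W_def less_imp_le simp flip: sum_divide_distrib)
  then show ?thesis
    by (simp add: W_def scaleR_sum_right sum_divide_distrib divide_inverse_commute
        sum_distrib_left mult.assoc)
qed

locale projected_subgradient =
  fixes X :: "'a::euclidean_space set" and Z :: "'z set"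
    and f :: "'a \<Rightarrow> 'z \<Rightarrow> real" and g :: "'a \<Rightarrow> 'z \<Rightarrow> 'a" and L :: real
  assumes closed: "closed X" and convex: "convex X" and nonempty: "X \<noteq> {}"
    and convex_f: "\<And>z'. z' \<in> Z \<Longrightarrow> convex_on X (\<lambda>x. f x z')"
    and subgrad: "\<And>z' x y. z' \<in> Z \<Longrightarrow> x \<in> X \<Longrightarrow> y \<in> X \<Longrightarrow>
                    f y z' \<ge> f x z' + inner (g x z') (y - x)"
    and subgrad_bound: "\<And>z' x. z' \<in> Z \<Longrightarrow> x \<in> X \<Longrightarrow> norm (g x z') \<le> L"
begin

lemma projected_step_in: "closest_point X y \<in> X"
  using closest_point_in_set[OF closed nonempty] .

lemma projected_step_dist:
  assumes "x \<in> X" "z' \<in> Z" "e \<ge> 0"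
  shows "norm (closest_point X (x - e *\<^sub>R g x z') - x) \<le> e * L"
proof -
  have "norm (closest_point X (x - e *\<^sub>R g x z') - x) \<le> e * norm (g x z')"
    using dist_closest_point_le[OF convex closed assms(1), of "x - e *\<^sub>R g x z'"] assms(3)
    by (simp add: dist_norm)
  also have "\<dots> \<le> e * L"
    using subgrad_bound[OF assms(2,1)] assms(3) by (simp add: mult_left_mono)
  finally show ?thesis .
qed

lemma projected_step_sq_dist:
  assumes "x \<in> X" "u \<in> X" "z' \<in> Z" "e \<ge> 0"
  shows "(norm (closest_point X (x - e *\<^sub>R g x z') - u))\<^sup>2
    \<le> (norm (x - u))\<^sup>2 - 2 * e * (f x z' - f u z') + e\<^sup>2 * L\<^sup>2"
proof -
  let ?v = "g x z'"
  have "norm (closest_point X (x - e *\<^sub>R ?v) - u) \<le> norm ((x - u) - e *\<^sub>R ?v)"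
    using dist_closest_point_le[OF convex closed assms(2), of "x - e *\<^sub>R ?v"]
    by (simp add: dist_norm algebra_simps)
  then have "(norm (closest_point X (x - e *\<^sub>R ?v) - u))\<^sup>2 \<le> (norm ((x - u) - e *\<^sub>R ?v))\<^sup>2"
    by (simp add: power_mono)
  also have "\<dots> = (norm (x - u))\<^sup>2 - 2 * e * inner ?v (x - u) + e\<^sup>2 * (norm ?v)\<^sup>2"
    unfolding power2_norm_eq_inner
    by (simp add: inner_diff_left inner_diff_right inner_commute power2_eq_square algebra_simps)
  also have "\<dots> \<le> (norm (x - u))\<^sup>2 - 2 * e * (f x z' - f u z') + e\<^sup>2 * L\<^sup>2"
  proof -
    have "f x z' - f u z' \<le> inner ?v (x - u)"
      using subgrad[OF assms(3,1,2)] by (simp add: inner_diff_right)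
    then have "2 * e * (f x z' - f u z') \<le> 2 * e * inner ?v (x - u)"
      using assms(4) by (simp add: mult_left_mono)
    moreover have "e\<^sup>2 * (norm ?v)\<^sup>2 \<le> e\<^sup>2 * L\<^sup>2"
      using subgrad_bound[OF assms(3,1)] by (simp add: mult_left_mono power_mono)
    ultimately show ?thesis
      by linarith
  qed
  finally show ?thesis .
qed

lemma subgrad_lower_bound:
  assumes "x \<in> X" "y \<in> X" "z' \<in> Z"
  shows "f x z' - L * norm (y - x) \<le> f y z'"
proof -
  have "norm (g x z') * norm (y - x) \<le> L * norm (y - x)"
    using subgrad_bound[OF assms(3,1)] by (simp add: mult_right_mono)
  then have "- (L * norm (y - x)) \<le> inner (g x z') (y - x)"
    using Cauchy_Schwarz_ineq2[of "g x z'" "y - x"] by linarith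
  then show ?thesis
    using subgrad[OF assms(3,1,2)] by linarith
qed

lemma sgd_pass_Suc:
  "sgd_pass X g z \<pi> e x (Suc t) =
     closest_point X (sgd_pass X g z \<pi> e x t - e *\<^sub>R g (sgd_pass X g z \<pi> e x t) (z (\<pi> (Suc t))))"
  by (simp add: Let_def)

lemma sgd_pass_in:
  assumes "x \<in> X"
  shows "sgd_pass X g z \<pi> e x t \<in> X"
  using assms by (cases t) (simp_all only: sgd_pass_Suc projected_step_in sgd_pass.simps(1))

lemma sgd_pass_dist:
  assumes "x \<in> X" "e \<ge> 0" "\<And>s. s \<in> {1..t} \<Longrightarrow> z (\<pi> s) \<in> Z"
  shows "norm (sgd_pass X g z \<pi> e x t - x) \<le> real t * e * L"
  using assms(3)
proof (induction t)
  case (Suc t)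
  let ?y = "sgd_pass X g z \<pi> e x t"
  have "norm (sgd_pass X g z \<pi> e x (Suc t) - x)
      \<le> norm (sgd_pass X g z \<pi> e x (Suc t) - ?y) + norm (?y - x)"
    using norm_triangle_ineq[of "sgd_pass X g z \<pi> e x (Suc t) - ?y" "?y - x"] by simp
  also have "\<dots> \<le> e * L + real t * e * L"
  proof (rule add_mono)
    show "norm (sgd_pass X g z \<pi> e x (Suc t) - ?y) \<le> e * L"
      unfolding sgd_pass_Suc using Suc.prems
      by (intro projected_step_dist[OF sgd_pass_in[OF assms(1)] _ assms(2)]) simp
    show "norm (?y - x) \<le> real t * e * L"
      using Suc by simp
  qed
  finally show ?case
    by (simp add: algebra_simps)
qed simp

lemma sgd_pass_sq_dist:
  assumes "x \<in> X" "u \<in> X" "e \<ge> 0" "\<And>s. s \<in> {1..t} \<Longrightarrow> z (\<pi> s) \<in> Z"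
  shows "(norm (sgd_pass X g z \<pi> e x t - u))\<^sup>2
    \<le> (norm (x - u))\<^sup>2 - 2 * e * (\<Sum>s=1..t. f x (z (\<pi> s)) - f u (z (\<pi> s)))
       + (real t)\<^sup>2 * e\<^sup>2 * L\<^sup>2"
  using assms(4)
proof (induction t)
  case (Suc t)
  let ?y = "sgd_pass X g z \<pi> e x t" and ?z = "z (\<pi> (Suc t))"
  have z: "?z \<in> Z"
    using Suc.prems by simp
  have y: "?y \<in> X"
    using sgd_pass_in[OF assms(1)] .
  have "L \<ge> 0"
    using subgrad_bound[OF z y] norm_ge_zero order_trans by blast
  have "norm (?y - x) \<le> real t * e * L"
    using Suc.prems by (intro sgd_pass_dist[OF assms(1,3)]) simp
  then have "L * norm (?y - x) \<le> L * (real t * e * L)"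
    using \<open>L \<ge> 0\<close> by (rule mult_left_mono)
  then have "f x ?z - L * (real t * e * L) \<le> f ?y ?z"
    using subgrad_lower_bound[OF assms(1) y z] by linarith
  then have "e * (f x ?z - f ?y ?z) \<le> e * (L * (real t * e * L))"
    using assms(3) by (intro mult_left_mono) auto
  then have lag: "- 2 * e * (f ?y ?z - f u ?z) \<le> - 2 * e * (f x ?z - f u ?z) + 2 * real t * e\<^sup>2 * L\<^sup>2"
    by (simp add: algebra_simps power2_eq_square)
  have "(norm (sgd_pass X g z \<pi> e x (Suc t) - u))\<^sup>2
      \<le> (norm (?y - u))\<^sup>2 - 2 * e * (f ?y ?z - f u ?z) + e\<^sup>2 * L\<^sup>2"
    unfolding sgd_pass_Suc using projected_step_sq_dist[OF y assms(2) z assms(3)] .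
  also have "\<dots> \<le> (norm (?y - u))\<^sup>2 - 2 * e * (f x ?z - f u ?z) + (2 * real t + 1) * e\<^sup>2 * L\<^sup>2"
    using lag by (simp add: algebra_simps)
  also have "\<dots> \<le> (norm (x - u))\<^sup>2 - 2 * e * (\<Sum>s=1..Suc t. f x (z (\<pi> s)) - f u (z (\<pi> s)))
       + (real (Suc t))\<^sup>2 * e\<^sup>2 * L\<^sup>2"
    using Suc by (simp add: algebra_simps power2_eq_square)
  finally show ?case .
qed simp

end

locale permuted_sgd = projected_subgradient X Z f g L
  for X :: "'a::euclidean_space set" and Z :: "'z set"
    and f :: "'a \<Rightarrow> 'z \<Rightarrow> real" and g :: "'a \<Rightarrow> 'z \<Rightarrow> 'a" and L :: real +
  fixes n :: nat and z :: "nat \<Rightarrow> 'z" and \<pi> :: "nat \<Rightarrow> nat"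
  assumes perm: "\<pi> permutes {1..n}" and data: "\<And>i. i \<in> {1..n} \<Longrightarrow> z i \<in> Z"
begin

lemma sgd_pass_epoch:
  assumes "x \<in> X" "u \<in> X" "e \<ge> 0"
  shows "2 * e * real n * (emp_risk f z n x - emp_risk f z n u)
    \<le> (norm (x - u))\<^sup>2 - (norm (sgd_pass X g z \<pi> e x n - u))\<^sup>2 + (real n)\<^sup>2 * e\<^sup>2 * L\<^sup>2"
proof -
  have "(\<Sum>s=1..n. f x (z (\<pi> s)) - f u (z (\<pi> s))) = (\<Sum>i=1..n. f x (z i) - f u (z i))"
    using sum.permute[OF perm, of "\<lambda>i. f x (z i) - f u (z i)"] by simp
  also have "\<dots> = real n * (emp_risk f z n x - emp_risk f z n u)"
    by (simp add: emp_risk_def sum_subtractf right_diff_distrib)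
  finally have epoch_sum: "(\<Sum>s=1..n. f x (z (\<pi> s)) - f u (z (\<pi> s)))
      = real n * (emp_risk f z n x - emp_risk f z n u)" .
  have "(norm (sgd_pass X g z \<pi> e x n - u))\<^sup>2
    \<le> (norm (x - u))\<^sup>2 - 2 * e * (\<Sum>s=1..n. f x (z (\<pi> s)) - f u (z (\<pi> s)))
       + (real n)\<^sup>2 * e\<^sup>2 * L\<^sup>2"
    using data permutes_in_image[OF perm] by (intro sgd_pass_sq_dist[OF assms(1-3)]) auto
  then show ?thesis
    unfolding epoch_sum by (simp add: algebra_simps)
qed

lemma sgd_start_in:
  assumes "x1 \<in> X"
  shows "sgd_start X g z \<pi> eta n x1 m \<in> X"
  using assms by (induction m) (simp_all add: sgd_pass_in del: sgd_pass.simps)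

lemma sgd_start_telescope:
  assumes "x1 \<in> X" "u \<in> X" "\<And>k. k \<in> {1..m} \<Longrightarrow> eta k \<ge> 0"
  shows "2 * real n * (\<Sum>k=1..m. eta k
            * (emp_risk f z n (sgd_start X g z \<pi> eta n x1 (k - 1)) - emp_risk f z n u))
    \<le> (norm (x1 - u))\<^sup>2 - (norm (sgd_start X g z \<pi> eta n x1 m - u))\<^sup>2
       + (real n)\<^sup>2 * L\<^sup>2 * (\<Sum>k=1..m. (eta k)\<^sup>2)"
  using assms(3)
proof (induction m)
  case (Suc m)
  have "eta (Suc m) \<ge> 0"
    using Suc.prems by simp
  moreover have "sgd_start X g z \<pi> eta n x1 m \<in> X"
    using assms(1) by (rule sgd_start_in)
  ultimately have "2 * eta (Suc m) * real n
      * (emp_risk f z n (sgd_start X g z \<pi> eta n x1 m) - emp_risk f z n u)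
    \<le> (norm (sgd_start X g z \<pi> eta n x1 m - u))\<^sup>2
       - (norm (sgd_start X g z \<pi> eta n x1 (Suc m) - u))\<^sup>2 + (real n)\<^sup>2 * (eta (Suc m))\<^sup>2 * L\<^sup>2"
    using sgd_pass_epoch[OF _ assms(2)] by simp
  then show ?case
    using Suc by (simp add: algebra_simps sum_distrib_left del: sgd_pass.simps)
qed simp

lemma emp_risk_sgd_avg_le:
  assumes "x1 \<in> X" "K \<ge> 1" "\<And>k. k \<in> {1..K} \<Longrightarrow> eta k > 0"
  shows "emp_risk f z n (sgd_avg X g z \<pi> eta n x1 K) - emp_risk f z n u
    \<le> (\<Sum>k=1..K. eta k * (emp_risk f z n (sgd_start X g z \<pi> eta n x1 (k - 1)) - emp_risk f z n u))
       / (\<Sum>k=1..K. eta k)"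
proof -
  let ?F = "emp_risk f z n" and ?s = "sgd_start X g z \<pi> eta n x1" and ?S = "\<Sum>k=1..K. eta k"
  have start_in: "?s m \<in> X" for m
    using assms(1) by (rule sgd_start_in)
  have "convex_on X ?F"
    by (auto intro: convex_on_emp_risk convex convex_f data)
  then have "?F (sgd_avg X g z \<pi> eta n x1 K) \<le> (\<Sum>k=1..K. eta k * ?F (?s (k - 1))) / ?S"
    unfolding sgd_avg_def using assms(2,3)
    by (intro convex_on_weighted_mean) (auto simp: start_in)
  moreover have "?S > 0"
    using assms(2,3) by (intro sum_pos) auto
  then have "?F u = (\<Sum>k=1..K. eta k * ?F u) / ?S"
    by (simp flip: sum_distrib_right)
  ultimately show ?thesis
    by (simp add: right_diff_distrib sum_subtractf diff_divide_distrib)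
qed

lemma sgd_avg_suboptimality:
  assumes "x1 \<in> X" "u \<in> X" "n \<ge> 1" "K \<ge> 1" "\<And>k. k \<in> {1..K} \<Longrightarrow> eta k > 0"
  shows "emp_risk f z n (sgd_avg X g z \<pi> eta n x1 K) - emp_risk f z n u
    \<le> (norm (x1 - u))\<^sup>2 / (2 * real n * (\<Sum>k=1..K. eta k))
       + L\<^sup>2 * real n / 2 * ((\<Sum>k=1..K. (eta k)\<^sup>2) / (\<Sum>k=1..K. eta k))"
proof -
  let ?s = "sgd_start X g z \<pi> eta n x1"
  let ?S = "\<Sum>k=1..K. eta k" and ?Q = "\<Sum>k=1..K. (eta k)\<^sup>2"
  define D where "D = (\<Sum>k=1..K. eta k * (emp_risk f z n (?s (k - 1)) - emp_risk f z n u))"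
  have "?S > 0"
    using assms(4,5) by (intro sum_pos) auto
  have "2 * real n * D \<le> (norm (x1 - u))\<^sup>2 - (norm (?s K - u))\<^sup>2 + (real n)\<^sup>2 * L\<^sup>2 * ?Q"
    unfolding D_def using assms(5) by (intro sgd_start_telescope[OF assms(1,2)]) (simp add: less_imp_le)
  then have D_le: "2 * real n * D \<le> (norm (x1 - u))\<^sup>2 + (real n)\<^sup>2 * L\<^sup>2 * ?Q"
    using zero_le_power2[of "norm (?s K - u)"] by linarith
  have "emp_risk f z n (sgd_avg X g z \<pi> eta n x1 K) - emp_risk f z n u \<le> D / ?S"
    unfolding D_def using assms(1,4,5) by (rule emp_risk_sgd_avg_le)
  also have "\<dots> = (2 * real n * D) / (2 * real n * ?S)"
    using assms(3) by simp
  also have "\<dots> \<le> ((norm (x1 - u))\<^sup>2 + (real n)\<^sup>2 * L\<^sup>2 * ?Q) / (2 * real n * ?S)"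
    using D_le \<open>?S > 0\<close> by (intro divide_right_mono) simp_all
  also have "\<dots> = (norm (x1 - u))\<^sup>2 / (2 * real n * ?S) + L\<^sup>2 * real n / 2 * (?Q / ?S)"
    using assms(3) by (simp add: add_divide_distrib power2_eq_square)
  finally show ?thesis .
qed

end

theorem corollaryC2:
  fixes X :: "'a::euclidean_space set" and Z :: "'z set"
    and f :: "'a \<Rightarrow> 'z \<Rightarrow> real" and g :: "'a \<Rightarrow> 'z \<Rightarrow> 'a"
    and L :: real and n K :: nat and z :: "nat \<Rightarrow> 'z" and \<pi> :: "nat \<Rightarrow> nat"
    and eta :: "nat \<Rightarrow> real" and x1 xstar :: 'a
  assumes "closed X" and "convex X"
    and convex: "\<And>z'. z' \<in> Z \<Longrightarrow> convex_on X (\<lambda>x. f x z')"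
    and lipschitz: "\<And>z'. z' \<in> Z \<Longrightarrow> L-lipschitz_on X (\<lambda>x. f x z')"
    and subgrad: "\<And>z' x y. z' \<in> Z \<Longrightarrow> x \<in> X \<Longrightarrow> y \<in> X \<Longrightarrow>
                    f y z' \<ge> f x z' + inner (g x z') (y - x)"
    and subgrad_bound: "\<And>z' x. z' \<in> Z \<Longrightarrow> x \<in> X \<Longrightarrow> norm (g x z') \<le> L"
    and "n \<ge> 1" and data: "\<And>i. i \<in> {1..n} \<Longrightarrow> z i \<in> Z"
    and perm: "\<pi> permutes {1..n}"
    and "K \<ge> 1" and eta_pos: "\<And>k. k \<in> {1..K} \<Longrightarrow> eta k > 0"
    and "x1 \<in> X"
    and xstar: "xstar \<in> X" "\<And>x. x \<in> X \<Longrightarrow> emp_risk f z n xstar \<le> emp_risk f z n x"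
  shows "emp_risk f z n (sgd_avg X g z \<pi> eta n x1 K) - emp_risk f z n xstar
     \<le> (norm (x1 - xstar))\<^sup>2 / (2 * real n * (\<Sum>k=1..K. eta k))
       + L\<^sup>2 * (real n + 2) / 2 * ((\<Sum>k=1..K. (eta k)\<^sup>2) / (\<Sum>k=1..K. eta k))"
proof -
  interpret permuted_sgd X Z f g L n z \<pi>
    using assms by unfold_locales auto
  let ?S = "\<Sum>k=1..K. eta k" and ?Q = "\<Sum>k=1..K. (eta k)\<^sup>2"
  have "emp_risk f z n (sgd_avg X g z \<pi> eta n x1 K) - emp_risk f z n xstar
      \<le> (norm (x1 - xstar))\<^sup>2 / (2 * real n * ?S) + L\<^sup>2 * real n / 2 * (?Q / ?S)"
    using sgd_avg_suboptimality assms by blast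
  moreover have "L\<^sup>2 * real n / 2 * (?Q / ?S) \<le> L\<^sup>2 * (real n + 2) / 2 * (?Q / ?S)"
    using eta_pos by (intro mult_right_mono divide_nonneg_nonneg sum_nonneg) (auto simp: less_imp_le mult_left_mono)
  ultimately show ?thesis
    by linarith
qed

end
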